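(* Let $S\subset\mathbb{P}^3$ be the cubic surface $t_1t_2(t_1+t_2)=t_3^2t_4$, and let $U\subset S$ be the open subset obtained by deleting the six lines $t_i=t_j=0$ and $t_j=t_1+t_2=0$ for $i\in\{1,2\}$, $j\in\{3,4\}$. Let $N_U(B)=\#\{x\in U(\mathbb{Q}):H(x)\leq B\}$. For $v\in\mathbb{R}$ and $\mathbf{s},\mathbf{u},\mathbf{y}\in\mathbb{R}^3$ define $$\Psi(v,\mathbf{s},\mathbf{u},\mathbf{y})=\max\{|s_1s_2s_3|,\ |u_1^2u_2^2u_3^2v^3y_1y_2y_3|,\ |s_1u_1^2u_2u_3v^2y_1^2|,\ |s_2u_1u_2^2u_3v^2y_2^2|\}.$$ Then $N_U(B)$ equals $2$ times the number of $(v,\mathbf{s},\mathbf{u},\mathbf{y})$ with $v\in\mathbb{N}$, $\mathbf{s}=(s_1,s_2,s_3)\in\mathbb{N}^3$, $\mathbf{u}=(u_1,u_2,u_3)\in\mathbb{Z}^3$, $\mathbf{y}=(y_1,y_2,y_3)\in\mathbb{N}^3$ such that $$u_3>0,\quad \Psi(v,\mathbf{s},\mathbf{u},\mathbf{y})\leq B,\quad s_1u_1y_1^2+s_2u_2y_2^2+s_3u_3y_3^2=0,$$ $$|\mu(u_1u_2u_3)|=1,\quad \gcd(s_1s_2s_3,u_1u_2u_3v)=1,\quad \gcd(y_i,y_j)=1,\quad \gcd(y_i,s_j,s_k)=1,$$ where $i,j,k$ denote distinct elements of $\{1,2,3\}$.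
   Context: For $x\in\mathbb{P}^{3}(\mathbb{Q})$ written as $x=[\mathbf{t}]$ with $\mathbf{t}\in\mathbb{Z}^4$ primitive, $H(x)=\max_i|t_i|$. $\mathbb{N}=\{1,2,3,\dots\}$ and $\mu$ is the Möbius function (so $|\mu(n)|=1$ means $n$ is square-free). *)

theory Defs
  imports Complex_Main "HOL-Computational_Algebra.Squarefree" "HOL-Computational_Algebra.Primes"
begin

definition moebius :: "nat \<Rightarrow> int" where
  "moebius n = (if squarefree n then (-1) ^ card (prime_factors n) else 0)"

type_synonym vec4 = "int \<times> int \<times> int \<times> int"

definition primitive4 :: "vec4 \<Rightarrow> bool" where
  "primitive4 t = (case t of (a,b,c,d) \<Rightarrow> gcd (gcd a b) (gcd c d) = 1)"

definition neg4 :: "vec4 \<Rightarrow> vec4" where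
  "neg4 t = (case t of (a,b,c,d) \<Rightarrow> (-a,-b,-c,-d))"

definition H4 :: "vec4 \<Rightarrow> int" where
  "H4 t = (case t of (a,b,c,d) \<Rightarrow> max (max \<bar>a\<bar> \<bar>b\<bar>) (max \<bar>c\<bar> \<bar>d\<bar>))"

definition onS :: "vec4 \<Rightarrow> bool" where
  "onS t = (case t of (t1,t2,t3,t4) \<Rightarrow> t1 * t2 * (t1 + t2) = t3^2 * t4)"

definition inU :: "vec4 \<Rightarrow> bool" where
  "inU t = (case t of (t1,t2,t3,t4) \<Rightarrow>
     onS t
     \<and> \<not> (t1 = 0 \<and> t3 = 0) \<and> \<not> (t1 = 0 \<and> t4 = 0)
     \<and> \<not> (t2 = 0 \<and> t3 = 0) \<and> \<not> (t2 = 0 \<and> t4 = 0)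
     \<and> \<not> (t3 = 0 \<and> t1 + t2 = 0) \<and> \<not> (t4 = 0 \<and> t1 + t2 = 0))"

text \<open>Rational points of P^3 are identified with pairs {t, -t} of primitive
  integer vectors; N_U(B) counts those in U with height at most B.\<close>
definition N_U :: "real \<Rightarrow> nat" where
  "N_U B = card ((\<lambda>t. {t, neg4 t}) ` {t. primitive4 t \<and> inU t \<and> real_of_int (H4 t) \<le> B})"

definition Psi :: "int \<Rightarrow> int \<times> int \<times> int \<Rightarrow> int \<times> int \<times> int \<Rightarrow> int \<times> int \<times> int \<Rightarrow> int" where
  "Psi v s u y = (case s of (s1,s2,s3) \<Rightarrow> case u of (u1,u2,u3) \<Rightarrow> case y of (y1,y2,y3) \<Rightarrow>
     max (max \<bar>s1*s2*s3\<bar> \<bar>u1^2*u2^2*u3^2*v^3*y1*y2*y3\<bar>)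
         (max \<bar>s1*u1^2*u2*u3*v^2*y1^2\<bar> \<bar>s2*u1*u2^2*u3*v^2*y2^2\<bar>))"

definition param_set :: "real \<Rightarrow> (int \<times> (int \<times> int \<times> int) \<times> (int \<times> int \<times> int) \<times> (int \<times> int \<times> int)) set" where
  "param_set B = {(v, (s1,s2,s3), (u1,u2,u3), (y1,y2,y3)).
     v \<ge> 1 \<and> s1 \<ge> 1 \<and> s2 \<ge> 1 \<and> s3 \<ge> 1 \<and> y1 \<ge> 1 \<and> y2 \<ge> 1 \<and> y3 \<ge> 1
     \<and> u3 > 0
     \<and> real_of_int (Psi v (s1,s2,s3) (u1,u2,u3) (y1,y2,y3)) \<le> B
     \<and> s1*u1*y1^2 + s2*u2*y2^2 + s3*u3*y3^2 = 0
     \<and> \<bar>moebius (nat \<bar>u1*u2*u3\<bar>)\<bar> = 1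
     \<and> gcd (s1*s2*s3) (u1*u2*u3*v) = 1
     \<and> gcd y1 y2 = 1 \<and> gcd y1 y3 = 1 \<and> gcd y2 y3 = 1
     \<and> gcd y1 (gcd s2 s3) = 1 \<and> gcd y2 (gcd s1 s3) = 1 \<and> gcd y3 (gcd s1 s2) = 1}"

end

theory Submission
  imports Defs
begin

text \<open>A point \<open>t\<close> of \<open>U\<close> with \<open>t4 < 0\<close> is the same as a triple \<open>a1 = t1\<close>, \<open>a2 = t2\<close>,
  \<open>a3 = -(t1 + t2)\<close> of nonzero integers with \<open>a1 + a2 + a3 = 0\<close> and \<open>a1 a2 a3 = T\<^sup>2 n\<close>, where
  \<open>T = |t3|\<close> and \<open>n = -t4\<close>, and no prime divides all of \<open>a1, a2, T, n\<close>.  Splitting off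
  \<open>s\<^sub>i = gcd a\<^sub>i n\<close>, then the common factor \<open>G\<close> of the \<open>a\<^sub>i / s\<^sub>i\<close>, and finally the square and
  squarefree parts of \<open>G\<close> and of the remaining cofactors \<open>b\<^sub>i\<close> yields the parameters, with
  \<open>a\<^sub>i = s\<^sub>i u\<^sub>i w v\<^sup>2 y\<^sub>i\<^sup>2\<close>, \<open>T = w\<^sup>2 v\<^sup>3 y1 y2 y3\<close>, \<open>n = s1 s2 s3\<close> and \<open>w = u1 u2 u3\<close>.
  Everything is checked one prime at a time: the valuations \<open>A\<^sub>i\<close> of \<open>a\<^sub>i\<close>, \<open>t\<close> of \<open>T\<close> and \<open>e\<close>
  of \<open>n\<close> satisfy \<open>A1 + A2 + A3 = 2 t + e\<close>, the two smallest \<open>A\<^sub>i\<close> coincide (as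
  \<open>a1 + a2 + a3 = 0\<close>), and one of \<open>A1, A2, t, e\<close> vanishes.  This leaves seven valuation patterns, and in each of them the decomposition is
  admissible and is inverted by the parametrisation.  The factor 2 is the sign of \<open>t3\<close>.\<close>

section \<open>Multiplicities\<close>

lemma int_eq_if_multiplicity_eq:
  fixes x y :: int
  assumes "x > 0" "y > 0" "\<And>p. prime p \<Longrightarrow> multiplicity p x = multiplicity p y"
  shows "x = y"
  using multiplicity_eq_imp_eq[of x y] assms by simp

lemma gcd_eq_1_iff_multiplicity:
  fixes x y :: int
  assumes "x \<noteq> 0" "y \<noteq> 0"
  shows "gcd x y = 1 \<longleftrightarrow> (\<forall>p. prime p \<longrightarrow> multiplicity p x = 0 \<or> multiplicity p y = 0)"
proof
  assume "gcd x y = 1"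
  then show "\<forall>p. prime p \<longrightarrow> multiplicity p x = 0 \<or> multiplicity p y = 0"
    using multiplicity_gcd[OF assms] by (metis min_def multiplicity_one)
next
  assume "\<forall>p. prime p \<longrightarrow> multiplicity p x = 0 \<or> multiplicity p y = 0"
  then show "gcd x y = 1"
    using assms multiplicity_gcd[OF assms] by (intro int_eq_if_multiplicity_eq) auto
qed

lemma gcd_gcd_eq_1_iff_multiplicity:
  fixes a b c d :: int
  assumes "a \<noteq> 0" "b \<noteq> 0" "c \<noteq> 0" "d \<noteq> 0"
  shows "gcd (gcd a b) (gcd c d) = 1 \<longleftrightarrow> (\<forall>p. prime p \<longrightarrow>
    multiplicity p a = 0 \<or> multiplicity p b = 0 \<or> multiplicity p c = 0 \<or> multiplicity p d = 0)"
  using assms by (auto simp: gcd_eq_1_iff_multiplicity multiplicity_gcd min_def)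

lemmas prime_multiplicity_distrib =
  prime_elem_multiplicity_mult_distrib[OF prime_imp_prime_elem]
  prime_elem_multiplicity_power_distrib[OF prime_imp_prime_elem]

lemma multiplicity_abs [simp]: "multiplicity p \<bar>x\<bar> = multiplicity p (x :: int)"
  by (cases "x \<ge> 0") auto

lemma multiplicity_sgn_mult [simp]:
  "b \<noteq> 0 \<Longrightarrow> multiplicity p (sgn b * x) = multiplicity p (x :: int)"
  by (auto simp: sgn_if)

lemma multiplicity_div:
  fixes x y :: "'a :: factorial_semiring"
  assumes "prime p" "y dvd x" "x \<noteq> 0"
  shows "multiplicity p (x div y) = multiplicity p x - multiplicity p y"
proof -
  have "y \<noteq> 0" "x div y \<noteq> 0"
    using assms by auto
  moreover have "x = y * (x div y)"
    using assms(2) by simp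
  ultimately have "multiplicity p x = multiplicity p y + multiplicity p (x div y)"
    using prime_elem_multiplicity_mult_distrib[OF prime_imp_prime_elem[OF assms(1)]] by metis
  then show ?thesis
    by simp
qed

lemma multiplicity_ge_min_if_sum_eq_0:
  fixes a b c :: "'a :: {factorial_semiring, comm_ring_1}"
  assumes "prime p" "a + b + c = 0" "a \<noteq> 0"
  shows "multiplicity p a \<ge> min (multiplicity p b) (multiplicity p c)"
proof -
  define k where "k = min (multiplicity p b) (multiplicity p c)"
  have "p ^ k dvd b" "p ^ k dvd c"
    unfolding k_def by (auto intro: multiplicity_dvd')
  moreover have "a = - (b + c)"
    using assms(2) by (simp add: eq_neg_iff_add_eq_0 add.assoc del: minus_add_distrib)
  ultimately have "p ^ k dvd a"
    by simp
  then show ?thesis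
    using assms(1,3) multiplicity_geI not_prime_unit unfolding k_def by metis
qed

lemma squarefree_nat_abs_iff: "squarefree (nat \<bar>w\<bar>) \<longleftrightarrow> squarefree (w :: int)"
proof
  assume sq: "squarefree (nat \<bar>w\<bar>)"
  show "squarefree w"
  proof (rule squarefreeI)
    fix x :: int
    assume "x ^ 2 dvd w"
    then have "int (nat \<bar>x\<bar> ^ 2) dvd int (nat \<bar>w\<bar>)"
      by (simp add: power_abs)
    then have "nat \<bar>x\<bar> dvd 1"
      using squarefreeD[OF sq] by (simp only: int_dvd_int_iff)
    then show "x dvd 1"
      by (simp add: nat_abs_dvd_iff)
  qed
next
  assume sq: "squarefree w"
  show "squarefree (nat \<bar>w\<bar>)"
  proof (rule squarefreeI)
    fix x :: nat
    assume "x ^ 2 dvd nat \<bar>w\<bar>"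
    then have "int x ^ 2 dvd w"
      by (metis int_dvd_int_iff of_nat_power dvd_abs_iff int_nat_eq abs_ge_zero)
    then have "int x dvd 1"
      using squarefreeD[OF sq] by blast
    then show "x dvd 1"
      by simp
  qed
qed

lemma abs_moebius_eq_1_iff: "\<bar>moebius n\<bar> = 1 \<longleftrightarrow> squarefree n"
  by (simp add: moebius_def power_abs)

lemma square_part_pos: "(x :: int) \<noteq> 0 \<Longrightarrow> square_part x > 0"
  by (metis le_less normalize_square_part abs_ge_zero square_part_0_iff normalize_int_def)

lemma
  fixes u y :: int
  assumes "squarefree u" "y > 0"
  shows square_part_mult_square: "square_part (u * y ^ 2) = y"
    and squarefree_part_mult_square: "squarefree_part (u * y ^ 2) = u"
proof -
  have u: "u \<noteq> 0"
    using assms(1) by auto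
  show sq: "square_part (u * y ^ 2) = y"
  proof (rule int_eq_if_multiplicity_eq)
    fix p :: int
    assume p: "prime p"
    have "multiplicity p (u * y ^ 2) = multiplicity p u + 2 * multiplicity p y"
      using u assms(2) p by (simp add: prime_multiplicity_distrib)
    moreover have "multiplicity p u \<le> 1"
      using assms(1) u p squarefree_factorial_semiring'' by blast
    ultimately show "multiplicity p (square_part (u * y ^ 2)) = multiplicity p y"
      using p by (simp add: prime_multiplicity_square_part)
  qed (use u assms(2) square_part_pos in auto)
  then show "squarefree_part (u * y ^ 2) = u"
    using u assms(2) by (simp add: squarefree_part_def)
qed

section \<open>Valuation patterns\<close>

text \<open>The parametrisation at a single prime: \<open>A\<^sub>i, t, e\<close> are the valuations of \<open>a\<^sub>i, T, n\<close>, and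
  \<open>\<sigma>\<^sub>i, g, \<beta>\<^sub>i\<close> those of \<open>s\<^sub>i\<close>, \<open>G\<close> and \<open>b\<^sub>i\<close>.\<close>
lemma exponents_decompose:
  fixes A1 A2 A3 t e \<sigma>1 \<sigma>2 \<sigma>3 g \<beta>1 \<beta>2 \<beta>3 :: nat
  assumes sum: "A1 + A2 + A3 = 2 * t + e"
    and primitive: "A1 = 0 \<or> A2 = 0 \<or> t = 0 \<or> e = 0"
    and ultra: "A1 \<ge> min A2 A3" "A2 \<ge> min A1 A3" "A3 \<ge> min A1 A2"
    and \<sigma>: "\<sigma>1 = min A1 e" "\<sigma>2 = min A2 e" "\<sigma>3 = min A3 e"
    and g: "g = min (A1 - \<sigma>1) (min (A2 - \<sigma>2) (A3 - \<sigma>3))"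
    and \<beta>: "\<beta>1 = A1 - \<sigma>1 - g" "\<beta>2 = A2 - \<sigma>2 - g" "\<beta>3 = A3 - \<sigma>3 - g"
  shows "\<sigma>1 + \<sigma>2 + \<sigma>3 = e"
    and "g = \<beta>1 mod 2 + \<beta>2 mod 2 + \<beta>3 mod 2 + 2 * (g div 2)"
    and "\<beta>1 mod 2 + \<beta>2 mod 2 + \<beta>3 mod 2 \<le> 1"
    and "t = 2 * (\<beta>1 mod 2 + \<beta>2 mod 2 + \<beta>3 mod 2) + 3 * (g div 2) + \<beta>1 div 2 + \<beta>2 div 2 + \<beta>3 div 2"
    and "e = 0 \<or> \<beta>1 mod 2 + \<beta>2 mod 2 + \<beta>3 mod 2 + g div 2 = 0"
    and "\<beta>1 div 2 = 0 \<or> \<beta>2 div 2 = 0" "\<beta>1 div 2 = 0 \<or> \<beta>3 div 2 = 0" "\<beta>2 div 2 = 0 \<or> \<beta>3 div 2 = 0"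
    and "\<beta>1 div 2 = 0 \<or> \<sigma>2 = 0 \<or> \<sigma>3 = 0" "\<beta>2 div 2 = 0 \<or> \<sigma>1 = 0 \<or> \<sigma>3 = 0"
      "\<beta>3 div 2 = 0 \<or> \<sigma>1 = 0 \<or> \<sigma>2 = 0"
proof -
  have balanced: "(c - m) mod 2 = m mod 2" "3 * (m div 2) + 2 * (m mod 2) + (c - m) div 2 = t"
    if "2 * m + c = 2 * t" "m \<le> c" for m c
  proof -
    have m: "m = 2 * (m div 2) + m mod 2" "m mod 2 < 2"
      by simp_all
    with that have "c - m = 2 * (t - 3 * (m div 2) - 2 * (m mod 2)) + m mod 2"
      by linarith
    then have "(c - m) mod 2 = m mod 2" "(c - m) div 2 = t - 3 * (m div 2) - 2 * (m mod 2)"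
      by simp_all
    with that m show "(c - m) mod 2 = m mod 2" "3 * (m div 2) + 2 * (m mod 2) + (c - m) div 2 = t"
      by linarith+
  qed
  have "(e = 0 \<and> A1 = A2 \<and> A1 \<le> A3) \<or> (e = 0 \<and> A1 = A3 \<and> A1 \<le> A2) \<or> (e = 0 \<and> A2 = A3 \<and> A2 \<le> A1)
      \<or> t = 0 \<or> (A1 = 0 \<and> A2 = 0) \<or> (A1 = 0 \<and> A3 = 0) \<or> (A2 = 0 \<and> A3 = 0)"
    using sum primitive ultra by (auto simp: min_def split: if_splits)
  then have "(e = 0 \<and> \<sigma>1 = 0 \<and> \<sigma>2 = 0 \<and> \<sigma>3 = 0 \<and> g = A1 \<and> \<beta>1 = 0 \<and> \<beta>2 = 0 \<and> \<beta>3 = A3 - A1 \<and> (A3 - A1) mod 2 = A1 mod 2 \<and> 3 * (A1 div 2) + 2 * (A1 mod 2) + (A3 - A1) div 2 = t)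
    \<or> (e = 0 \<and> \<sigma>1 = 0 \<and> \<sigma>2 = 0 \<and> \<sigma>3 = 0 \<and> g = A1 \<and> \<beta>1 = 0 \<and> \<beta>3 = 0 \<and> \<beta>2 = A2 - A1 \<and> (A2 - A1) mod 2 = A1 mod 2 \<and> 3 * (A1 div 2) + 2 * (A1 mod 2) + (A2 - A1) div 2 = t)
    \<or> (e = 0 \<and> \<sigma>1 = 0 \<and> \<sigma>2 = 0 \<and> \<sigma>3 = 0 \<and> g = A2 \<and> \<beta>2 = 0 \<and> \<beta>3 = 0 \<and> \<beta>1 = A1 - A2 \<and> (A1 - A2) mod 2 = A2 mod 2 \<and> 3 * (A2 div 2) + 2 * (A2 mod 2) + (A1 - A2) div 2 = t)
    \<or> (t = 0 \<and> \<sigma>1 = A1 \<and> \<sigma>2 = A2 \<and> \<sigma>3 = A3 \<and> g = 0 \<and> \<beta>1 = 0 \<and> \<beta>2 = 0 \<and> \<beta>3 = 0)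
    \<or> (\<sigma>1 = 0 \<and> \<sigma>2 = 0 \<and> \<sigma>3 = e \<and> g = 0 \<and> \<beta>1 = 0 \<and> \<beta>2 = 0 \<and> \<beta>3 = 2 * t)
    \<or> (\<sigma>1 = 0 \<and> \<sigma>3 = 0 \<and> \<sigma>2 = e \<and> g = 0 \<and> \<beta>1 = 0 \<and> \<beta>3 = 0 \<and> \<beta>2 = 2 * t)
    \<or> (\<sigma>2 = 0 \<and> \<sigma>3 = 0 \<and> \<sigma>1 = e \<and> g = 0 \<and> \<beta>2 = 0 \<and> \<beta>3 = 0 \<and> \<beta>1 = 2 * t)"
    using sum \<sigma> g \<beta> by (elim disjE conjE; simp add: balanced)
  then show "\<sigma>1 + \<sigma>2 + \<sigma>3 = e"
    and "g = \<beta>1 mod 2 + \<beta>2 mod 2 + \<beta>3 mod 2 + 2 * (g div 2)"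
    and "\<beta>1 mod 2 + \<beta>2 mod 2 + \<beta>3 mod 2 \<le> 1"
    and "t = 2 * (\<beta>1 mod 2 + \<beta>2 mod 2 + \<beta>3 mod 2) + 3 * (g div 2) + \<beta>1 div 2 + \<beta>2 div 2 + \<beta>3 div 2"
    and "e = 0 \<or> \<beta>1 mod 2 + \<beta>2 mod 2 + \<beta>3 mod 2 + g div 2 = 0"
    and "\<beta>1 div 2 = 0 \<or> \<beta>2 div 2 = 0" "\<beta>1 div 2 = 0 \<or> \<beta>3 div 2 = 0" "\<beta>2 div 2 = 0 \<or> \<beta>3 div 2 = 0"
    and "\<beta>1 div 2 = 0 \<or> \<sigma>2 = 0 \<or> \<sigma>3 = 0" "\<beta>2 div 2 = 0 \<or> \<sigma>1 = 0 \<or> \<sigma>3 = 0"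
      "\<beta>3 div 2 = 0 \<or> \<sigma>1 = 0 \<or> \<sigma>2 = 0"
    using sum by (elim disjE conjE; simp)+
qed

text \<open>Conversely, \<open>\<sigma>\<^sub>i, \<mu>\<^sub>i, \<nu>, \<eta>\<^sub>i\<close> are the valuations of \<open>s\<^sub>i, u\<^sub>i, v, y\<^sub>i\<close>, and
  \<open>\<alpha>\<^sub>i, \<tau>, e\<close> those of \<open>a\<^sub>i, T, n\<close>.\<close>
lemma exponents_recover:
  fixes \<sigma>1 \<sigma>2 \<sigma>3 \<mu>1 \<mu>2 \<mu>3 \<nu> \<eta>1 \<eta>2 \<eta>3 :: nat
  defines "M \<equiv> \<mu>1 + \<mu>2 + \<mu>3" and "e \<equiv> \<sigma>1 + \<sigma>2 + \<sigma>3"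
  assumes M: "M \<le> 1"
    and coprime: "e = 0 \<or> M + \<nu> = 0"
    and \<eta>: "\<eta>1 = 0 \<or> \<eta>2 = 0" "\<eta>1 = 0 \<or> \<eta>3 = 0" "\<eta>2 = 0 \<or> \<eta>3 = 0"
    and \<eta>\<sigma>: "\<eta>1 = 0 \<or> \<sigma>2 = 0 \<or> \<sigma>3 = 0" "\<eta>2 = 0 \<or> \<sigma>1 = 0 \<or> \<sigma>3 = 0" "\<eta>3 = 0 \<or> \<sigma>1 = 0 \<or> \<sigma>2 = 0"
    and ultra: "\<sigma>1 + \<mu>1 + 2 * \<eta>1 \<ge> min (\<sigma>2 + \<mu>2 + 2 * \<eta>2) (\<sigma>3 + \<mu>3 + 2 * \<eta>3)"
      "\<sigma>2 + \<mu>2 + 2 * \<eta>2 \<ge> min (\<sigma>1 + \<mu>1 + 2 * \<eta>1) (\<sigma>3 + \<mu>3 + 2 * \<eta>3)"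
      "\<sigma>3 + \<mu>3 + 2 * \<eta>3 \<ge> min (\<sigma>1 + \<mu>1 + 2 * \<eta>1) (\<sigma>2 + \<mu>2 + 2 * \<eta>2)"
  defines "\<alpha>1 \<equiv> \<sigma>1 + \<mu>1 + M + 2 * \<nu> + 2 * \<eta>1" and "\<alpha>2 \<equiv> \<sigma>2 + \<mu>2 + M + 2 * \<nu> + 2 * \<eta>2"
    and "\<alpha>3 \<equiv> \<sigma>3 + \<mu>3 + M + 2 * \<nu> + 2 * \<eta>3" and "\<tau> \<equiv> 2 * M + 3 * \<nu> + \<eta>1 + \<eta>2 + \<eta>3"
  shows "min \<alpha>1 e = \<sigma>1" "min \<alpha>2 e = \<sigma>2" "min \<alpha>3 e = \<sigma>3"
    and "\<alpha>1 = 0 \<or> \<alpha>2 = 0 \<or> \<tau> = 0 \<or> e = 0"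
    and "min (\<alpha>1 - \<sigma>1) (min (\<alpha>2 - \<sigma>2) (\<alpha>3 - \<sigma>3)) = M + 2 * \<nu>"
proof -
  have "(\<mu>1 = 0 \<and> \<eta>1 = 0) \<or> (\<mu>2 = 0 \<and> \<eta>2 = 0) \<or> (\<mu>3 = 0 \<and> \<eta>3 = 0)"
    using M \<eta> unfolding M_def by auto
  then show "min (\<alpha>1 - \<sigma>1) (min (\<alpha>2 - \<sigma>2) (\<alpha>3 - \<sigma>3)) = M + 2 * \<nu>"
    unfolding \<alpha>1_def \<alpha>2_def \<alpha>3_def by (elim disjE) (simp_all add: min_def)
  have zero: "\<mu>1 = 0" "\<mu>2 = 0" "\<mu>3 = 0" "\<nu> = 0" if "e \<noteq> 0"
    using coprime that unfolding M_def by simp_all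
  have sparse: "\<eta>1 = 0 \<or> \<sigma>2 + \<sigma>3 = 0" "\<eta>2 = 0 \<or> \<sigma>1 + \<sigma>3 = 0" "\<eta>3 = 0 \<or> \<sigma>1 + \<sigma>2 = 0"
    if "e \<noteq> 0"
    using \<eta> \<eta>\<sigma> ultra zero[OF that] by (auto simp: min_def split: if_splits)
  show "min \<alpha>1 e = \<sigma>1" "min \<alpha>2 e = \<sigma>2" "min \<alpha>3 e = \<sigma>3" "\<alpha>1 = 0 \<or> \<alpha>2 = 0 \<or> \<tau> = 0 \<or> e = 0"
    using \<eta> zero sparse unfolding \<alpha>1_def \<alpha>2_def \<alpha>3_def \<tau>_def M_def e_def
    by (cases "\<sigma>1 + \<sigma>2 + \<sigma>3 = 0"; auto simp: min_def)+
qed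

section \<open>Decomposing a point\<close>

type_synonym param = "int \<times> (int \<times> int \<times> int) \<times> (int \<times> int \<times> int) \<times> (int \<times> int \<times> int)"

fun admissible :: "param \<Rightarrow> bool" where
  "admissible (v, (s1, s2, s3), (u1, u2, u3), (y1, y2, y3)) \<longleftrightarrow>
     v \<ge> 1 \<and> s1 \<ge> 1 \<and> s2 \<ge> 1 \<and> s3 \<ge> 1 \<and> y1 \<ge> 1 \<and> y2 \<ge> 1 \<and> y3 \<ge> 1 \<and> u3 > 0
     \<and> s1 * u1 * y1 ^ 2 + s2 * u2 * y2 ^ 2 + s3 * u3 * y3 ^ 2 = 0
     \<and> squarefree (u1 * u2 * u3)
     \<and> gcd (s1 * s2 * s3) (u1 * u2 * u3 * v) = 1
     \<and> gcd y1 y2 = 1 \<and> gcd y1 y3 = 1 \<and> gcd y2 y3 = 1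
     \<and> gcd y1 (gcd s2 s3) = 1 \<and> gcd y2 (gcd s1 s3) = 1 \<and> gcd y3 (gcd s1 s2) = 1"

lemma mem_param_set_iff:
  "(v, (s1, s2, s3), (u1, u2, u3), (y1, y2, y3)) \<in> param_set B \<longleftrightarrow>
     admissible (v, (s1, s2, s3), (u1, u2, u3), (y1, y2, y3))
     \<and> real_of_int (Psi v (s1, s2, s3) (u1, u2, u3) (y1, y2, y3)) \<le> B"
  unfolding param_set_def by (auto simp: abs_moebius_eq_1_iff squarefree_nat_abs_iff)

text \<open>The inverse of the parametrisation, applied to \<open>(t1, t2, -t1 - t2, -t4)\<close>.  The sign of \<open>b3\<close>
  is moved into the \<open>u\<^sub>i\<close> to make \<open>u3\<close> positive.\<close>
definition decompose :: "int \<Rightarrow> int \<Rightarrow> int \<Rightarrow> int \<Rightarrow> param" where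
  "decompose a1 a2 a3 n =
     (let s1 = gcd a1 n; s2 = gcd a2 n; s3 = gcd a3 n;
          G = gcd (a1 div s1) (gcd (a2 div s2) (a3 div s3));
          b1 = a1 div s1 div G; b2 = a2 div s2 div G; b3 = a3 div s3 div G
      in (square_part G, (s1, s2, s3),
          (sgn b3 * squarefree_part b1, sgn b3 * squarefree_part b2, sgn b3 * squarefree_part b3),
          (square_part b1, square_part b2, square_part b3)))"

lemma decompose_eqD:
  assumes "decompose a1 a2 a3 n = (v, (s1, s2, s3), (u1, u2, u3), (y1, y2, y3))"
  defines "G \<equiv> gcd (a1 div s1) (gcd (a2 div s2) (a3 div s3))"
  defines "b1 \<equiv> a1 div s1 div G" and "b2 \<equiv> a2 div s2 div G" and "b3 \<equiv> a3 div s3 div G"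
  shows "s1 = gcd a1 n" "s2 = gcd a2 n" "s3 = gcd a3 n" "v = square_part G"
    and "u1 = sgn b3 * squarefree_part b1" "u2 = sgn b3 * squarefree_part b2"
      "u3 = sgn b3 * squarefree_part b3"
    and "y1 = square_part b1" "y2 = square_part b2" "y3 = square_part b3"
  using assms(1) unfolding G_def b1_def b2_def b3_def decompose_def Let_def by auto

locale cubic_triple =
  fixes a1 a2 a3 T n :: int
  assumes nonzero: "a1 \<noteq> 0" "a2 \<noteq> 0" "a3 \<noteq> 0"
    and pos: "T > 0" "n > 0"
    and sum_eq_0: "a1 + a2 + a3 = 0"
    and prod_eq: "a1 * a2 * a3 = T ^ 2 * n"
    and primitive: "gcd (gcd a1 a2) (gcd T n) = 1"
begin

lemma exponents:
  assumes p: "prime p"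
  defines "vp \<equiv> multiplicity p"
  shows "vp a1 + vp a2 + vp a3 = 2 * vp T + vp n"
    and "vp a1 = 0 \<or> vp a2 = 0 \<or> vp T = 0 \<or> vp n = 0"
    and "vp a1 \<ge> min (vp a2) (vp a3)" "vp a2 \<ge> min (vp a1) (vp a3)" "vp a3 \<ge> min (vp a1) (vp a2)"
proof -
  have "vp (a1 * a2 * a3) = vp (T ^ 2 * n)"
    by (simp add: prod_eq)
  then show "vp a1 + vp a2 + vp a3 = 2 * vp T + vp n"
    using nonzero pos p unfolding vp_def by (simp add: prime_multiplicity_distrib)
  show "vp a1 = 0 \<or> vp a2 = 0 \<or> vp T = 0 \<or> vp n = 0"
    using primitive nonzero pos p unfolding vp_def by (simp add: gcd_gcd_eq_1_iff_multiplicity)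
  have sums: "a1 + a2 + a3 = 0" "a2 + a1 + a3 = 0" "a3 + a1 + a2 = 0"
    using sum_eq_0 by (simp_all add: ac_simps)
  show "vp a1 \<ge> min (vp a2) (vp a3)" "vp a2 \<ge> min (vp a1) (vp a3)" "vp a3 \<ge> min (vp a1) (vp a2)"
    unfolding vp_def
    by (rule multiplicity_ge_min_if_sum_eq_0[OF p sums(1) nonzero(1)]
        multiplicity_ge_min_if_sum_eq_0[OF p sums(2) nonzero(2)]
        multiplicity_ge_min_if_sum_eq_0[OF p sums(3) nonzero(3)])+
qed

lemma multiplicity_decompose:
  assumes dec: "decompose a1 a2 a3 n = (v, (s1, s2, s3), (u1, u2, u3), (y1, y2, y3))"
    and p: "prime p"
  defines "vp \<equiv> multiplicity p"
    and "G \<equiv> gcd (a1 div s1) (gcd (a2 div s2) (a3 div s3))"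
  shows "vp s1 + vp s2 + vp s3 = vp n"
    and "vp G = vp u1 + vp u2 + vp u3 + 2 * vp v"
    and "vp u1 + vp u2 + vp u3 \<le> 1"
    and "vp T = 2 * (vp u1 + vp u2 + vp u3) + 3 * vp v + vp y1 + vp y2 + vp y3"
    and "vp n = 0 \<or> vp u1 + vp u2 + vp u3 + vp v = 0"
    and "vp y1 = 0 \<or> vp y2 = 0" "vp y1 = 0 \<or> vp y3 = 0" "vp y2 = 0 \<or> vp y3 = 0"
    and "vp y1 = 0 \<or> vp s2 = 0 \<or> vp s3 = 0" "vp y2 = 0 \<or> vp s1 = 0 \<or> vp s3 = 0"
      "vp y3 = 0 \<or> vp s1 = 0 \<or> vp s2 = 0"
proof -
  define b1 b2 b3 where "b1 = a1 div s1 div G" and "b2 = a2 div s2 div G" and "b3 = a3 div s3 div G"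
  note D = decompose_eqD[OF dec, folded G_def, folded b1_def b2_def b3_def]
  have s: "s1 dvd a1" "s2 dvd a2" "s3 dvd a3" "s1 \<noteq> 0" "s2 \<noteq> 0" "s3 \<noteq> 0"
    using nonzero by (simp_all add: D)
  have vs: "vp s1 = min (vp a1) (vp n)" "vp s2 = min (vp a2) (vp n)" "vp s3 = min (vp a3) (vp n)"
    using nonzero pos p unfolding D vp_def by (simp_all add: multiplicity_gcd)
  have a_div: "a1 div s1 \<noteq> 0" "a2 div s2 \<noteq> 0" "a3 div s3 \<noteq> 0"
    using s nonzero by (auto elim: dvdE)
  have G: "G dvd a1 div s1" "G dvd a2 div s2" "G dvd a3 div s3" "G \<noteq> 0"
    using a_div unfolding G_def by (auto intro: dvd_trans)
  have vG: "vp G = min (vp a1 - vp s1) (min (vp a2 - vp s2) (vp a3 - vp s3))"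
    using a_div s nonzero p unfolding G_def vp_def by (simp add: multiplicity_gcd multiplicity_div)
  have vb: "vp b1 = vp a1 - vp s1 - vp G" "vp b2 = vp a2 - vp s2 - vp G" "vp b3 = vp a3 - vp s3 - vp G"
    using G a_div s nonzero p unfolding b1_def b2_def b3_def vp_def by (simp_all add: multiplicity_div)
  have "b3 \<noteq> 0"
    using G a_div unfolding b3_def by (auto elim: dvdE)
  then have vu: "vp b1 mod 2 = vp u1" "vp b2 mod 2 = vp u2" "vp b3 mod 2 = vp u3"
    using p unfolding D vp_def by (simp_all add: prime_multiplicity_squarefree_part)
  have vy: "vp b1 div 2 = vp y1" "vp b2 div 2 = vp y2" "vp b3 div 2 = vp y3" "vp G div 2 = vp v"
    using p unfolding D vp_def by (simp_all add: prime_multiplicity_square_part)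
  note E = exponents_decompose[OF exponents[OF p, folded vp_def] vs vG vb, unfolded vu vy]
  show "vp s1 + vp s2 + vp s3 = vp n"
    and "vp G = vp u1 + vp u2 + vp u3 + 2 * vp v"
    and "vp u1 + vp u2 + vp u3 \<le> 1"
    and "vp T = 2 * (vp u1 + vp u2 + vp u3) + 3 * vp v + vp y1 + vp y2 + vp y3"
    and "vp n = 0 \<or> vp u1 + vp u2 + vp u3 + vp v = 0"
    and "vp y1 = 0 \<or> vp y2 = 0" "vp y1 = 0 \<or> vp y3 = 0" "vp y2 = 0 \<or> vp y3 = 0"
    and "vp y1 = 0 \<or> vp s2 = 0 \<or> vp s3 = 0" "vp y2 = 0 \<or> vp s1 = 0 \<or> vp s3 = 0"
      "vp y3 = 0 \<or> vp s1 = 0 \<or> vp s2 = 0"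
    by (fact E)+
qed

lemma decompose_factorization:
  assumes dec: "decompose a1 a2 a3 n = (v, (s1, s2, s3), (u1, u2, u3), (y1, y2, y3))"
  defines "w \<equiv> u1 * u2 * u3"
  shows "a1 = s1 * u1 * w * v ^ 2 * y1 ^ 2" "a2 = s2 * u2 * w * v ^ 2 * y2 ^ 2"
      "a3 = s3 * u3 * w * v ^ 2 * y3 ^ 2"
    and "T = w ^ 2 * v ^ 3 * y1 * y2 * y3" "n = s1 * s2 * s3"
    and "v > 0" "s1 > 0" "s2 > 0" "s3 > 0" "y1 > 0" "y2 > 0" "y3 > 0" "u3 > 0"
proof -
  define G where "G = gcd (a1 div s1) (gcd (a2 div s2) (a3 div s3))"
  define b1 b2 b3 where "b1 = a1 div s1 div G" and "b2 = a2 div s2 div G" and "b3 = a3 div s3 div G"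
  note D = decompose_eqD[OF dec, folded G_def, folded b1_def b2_def b3_def]
  note V = multiplicity_decompose[OF dec, folded G_def]
  show s: "s1 > 0" "s2 > 0" "s3 > 0"
    using nonzero by (simp_all add: D)
  have "G > 0"
    using nonzero unfolding G_def by (simp add: D dvd_div_eq_0_iff)
  have "G dvd a1 div s1" "G dvd a2 div s2" "G dvd a3 div s3"
    unfolding G_def by (auto intro: dvd_trans)
  then have a: "a1 = s1 * G * b1" "a2 = s2 * G * b2" "a3 = s3 * G * b3"
    unfolding b1_def b2_def b3_def by (simp_all add: D mult.assoc)
  then have b: "b1 \<noteq> 0" "b2 \<noteq> 0" "b3 \<noteq> 0"
    using nonzero by auto
  show "v > 0" "y1 > 0" "y2 > 0" "y3 > 0"
    using b \<open>G > 0\<close> by (simp_all add: D square_part_pos)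
  show n: "n = s1 * s2 * s3"
    using V(1) pos s by (intro int_eq_if_multiplicity_eq) (simp_all add: prime_multiplicity_distrib)
  define \<epsilon> where "\<epsilon> = sgn b3"
  have \<epsilon>: "\<epsilon> * \<epsilon> = 1"
    using b by (simp add: \<epsilon>_def sgn_if)
  have bu: "b1 = \<epsilon> * u1 * y1 ^ 2" "b2 = \<epsilon> * u2 * y2 ^ 2" "b3 = \<epsilon> * u3 * y3 ^ 2"
    using squarefree_decompose[of b1] squarefree_decompose[of b2] squarefree_decompose[of b3] \<epsilon>
    unfolding D \<epsilon>_def[symmetric] by (simp_all add: mult.assoc[symmetric])
  have "G ^ 3 * (b1 * b2 * b3) * n = T ^ 2 * n"
    using prod_eq unfolding a n by (simp add: algebra_simps power3_eq_cube)
  then have "G ^ 3 * (b1 * b2 * b3) = T ^ 2"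
    using pos by simp
  then have "b1 * b2 * b3 > 0"
    using \<open>G > 0\<close> pos by (metis zero_less_mult_pos zero_less_power)
  moreover have "b1 * b2 * b3 = (\<epsilon> * w) * (\<epsilon> * \<epsilon>) * (y1 * y2 * y3) ^ 2"
    unfolding bu w_def by (simp add: algebra_simps power2_eq_square)
  ultimately have "\<epsilon> * w > 0"
    using \<epsilon> by (simp add: zero_less_mult_iff)
  then have abs_w: "\<bar>w\<bar> = \<epsilon> * w"
    using \<epsilon> by (auto simp: abs_if \<epsilon>_def sgn_if split: if_splits)
  have "w \<noteq> 0"
    using \<open>\<epsilon> * w > 0\<close> by auto
  have G_eq: "G = \<epsilon> * w * v ^ 2"
    unfolding abs_w[symmetric]
    using V(2) \<open>G > 0\<close> \<open>w \<noteq> 0\<close> \<open>v > 0\<close>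
    by (intro int_eq_if_multiplicity_eq) (simp_all add: prime_multiplicity_distrib w_def)
  show "a1 = s1 * u1 * w * v ^ 2 * y1 ^ 2" "a2 = s2 * u2 * w * v ^ 2 * y2 ^ 2"
    "a3 = s3 * u3 * w * v ^ 2 * y3 ^ 2"
    unfolding a G_eq bu using \<epsilon> by (simp_all add: algebra_simps)
  show "T = w ^ 2 * v ^ 3 * y1 * y2 * y3"
    using V(4) pos \<open>w \<noteq> 0\<close> \<open>v > 0\<close> \<open>y1 > 0\<close> \<open>y2 > 0\<close> \<open>y3 > 0\<close>
    by (intro int_eq_if_multiplicity_eq) (simp_all add: prime_multiplicity_distrib w_def)
  have "sgn b3 = sgn (squarefree_part b3)"
    using \<open>y3 > 0\<close> squarefree_decompose[of b3] unfolding D by (metis sgn_mult sgn_pos zero_less_power mult_1_right)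
  then have "u3 = sgn (squarefree_part b3) * squarefree_part b3"
    unfolding D by simp
  then show "u3 > 0"
    by (metis abs_sgn mult.commute squarefree_part_nonzero zero_less_abs_iff)
qed

lemma decompose_admissible:
  assumes dec: "decompose a1 a2 a3 n = (v, (s1, s2, s3), (u1, u2, u3), (y1, y2, y3))"
  shows "admissible (v, (s1, s2, s3), (u1, u2, u3), (y1, y2, y3))"
proof -
  define w where "w = u1 * u2 * u3"
  note F = decompose_factorization[OF dec, folded w_def]
  note V = multiplicity_decompose[OF dec]
  have "w \<noteq> 0"
    using nonzero(1) F(1) by auto
  then have nz: "u1 \<noteq> 0" "u2 \<noteq> 0" "u3 \<noteq> 0" "s1 \<noteq> 0" "s2 \<noteq> 0" "s3 \<noteq> 0"
      "v \<noteq> 0" "y1 \<noteq> 0" "y2 \<noteq> 0" "y3 \<noteq> 0"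
    using F(6-12) unfolding w_def by auto
  have mult_w: "multiplicity p w = multiplicity p u1 + multiplicity p u2 + multiplicity p u3"
    if "prime p" for p
    using that nz unfolding w_def by (simp add: prime_multiplicity_distrib)
  have "w * v ^ 2 * (s1 * u1 * y1 ^ 2 + s2 * u2 * y2 ^ 2 + s3 * u3 * y3 ^ 2) = a1 + a2 + a3"
    unfolding F(1-3) by (simp add: algebra_simps)
  then have "s1 * u1 * y1 ^ 2 + s2 * u2 * y2 ^ 2 + s3 * u3 * y3 ^ 2 = 0"
    using sum_eq_0 \<open>w \<noteq> 0\<close> nz by simp
  moreover have "squarefree w"
    using V(3) \<open>w \<noteq> 0\<close> mult_w by (simp add: squarefree_factorial_semiring'')
  moreover have "gcd (s1 * s2 * s3) (w * v) = 1"
    using V(5) \<open>w \<noteq> 0\<close> nz pos mult_w unfolding F(5)[symmetric]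
    by (simp add: gcd_eq_1_iff_multiplicity prime_multiplicity_distrib)
  moreover have "gcd y1 y2 = 1" "gcd y1 y3 = 1" "gcd y2 y3 = 1"
    using V(6-8) nz by (simp_all add: gcd_eq_1_iff_multiplicity)
  moreover have "gcd y1 (gcd s2 s3) = 1" "gcd y2 (gcd s1 s3) = 1" "gcd y3 (gcd s1 s2) = 1"
    using V(9-11) nz by (simp_all add: gcd_eq_1_iff_multiplicity multiplicity_gcd)
      (metis min_0L min_0R)+
  ultimately show ?thesis
    using F(6-) unfolding w_def by simp
qed

end

section \<open>Points from parameters\<close>

locale admissible_param =
  fixes v s1 s2 s3 u1 u2 u3 y1 y2 y3 :: int
  assumes admissible: "admissible (v, (s1, s2, s3), (u1, u2, u3), (y1, y2, y3))"
begin

abbreviation "w \<equiv> u1 * u2 * u3"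
abbreviation "a1 \<equiv> s1 * u1 * w * v ^ 2 * y1 ^ 2"
abbreviation "a2 \<equiv> s2 * u2 * w * v ^ 2 * y2 ^ 2"
abbreviation "a3 \<equiv> s3 * u3 * w * v ^ 2 * y3 ^ 2"
abbreviation "T \<equiv> w ^ 2 * v ^ 3 * y1 * y2 * y3"
abbreviation "n \<equiv> s1 * s2 * s3"

lemma nonzero: "u1 \<noteq> 0" "u2 \<noteq> 0" "u3 \<noteq> 0" "s1 \<noteq> 0" "s2 \<noteq> 0" "s3 \<noteq> 0"
  "v \<noteq> 0" "y1 \<noteq> 0" "y2 \<noteq> 0" "y3 \<noteq> 0"
  using admissible not_squarefree_0 by auto

lemma exponents:
  assumes p: "prime p"
  defines "vp \<equiv> multiplicity p"
  shows "vp u1 + vp u2 + vp u3 \<le> 1"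
    and "vp s1 + vp s2 + vp s3 = 0 \<or> vp u1 + vp u2 + vp u3 + vp v = 0"
    and "vp y1 = 0 \<or> vp y2 = 0" "vp y1 = 0 \<or> vp y3 = 0" "vp y2 = 0 \<or> vp y3 = 0"
    and "vp y1 = 0 \<or> vp s2 = 0 \<or> vp s3 = 0" "vp y2 = 0 \<or> vp s1 = 0 \<or> vp s3 = 0"
      "vp y3 = 0 \<or> vp s1 = 0 \<or> vp s2 = 0"
    and "vp s1 + vp u1 + 2 * vp y1 \<ge> min (vp s2 + vp u2 + 2 * vp y2) (vp s3 + vp u3 + 2 * vp y3)"
      "vp s2 + vp u2 + 2 * vp y2 \<ge> min (vp s1 + vp u1 + 2 * vp y1) (vp s3 + vp u3 + 2 * vp y3)"
      "vp s3 + vp u3 + 2 * vp y3 \<ge> min (vp s1 + vp u1 + 2 * vp y1) (vp s2 + vp u2 + 2 * vp y2)"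
proof -
  have A: "squarefree w" "gcd n (w * v) = 1" "gcd y1 y2 = 1" "gcd y1 y3 = 1" "gcd y2 y3 = 1"
      "gcd y1 (gcd s2 s3) = 1" "gcd y2 (gcd s1 s3) = 1" "gcd y3 (gcd s1 s2) = 1"
    using admissible by simp_all
  note nz = nonzero
  have coprime: "vp x = 0 \<or> vp y = 0" if "gcd x y = 1" "x \<noteq> 0" "y \<noteq> 0" for x y
  proof -
    have "\<forall>q. prime q \<longrightarrow> multiplicity q x = 0 \<or> multiplicity q y = 0"
      by (rule iffD1[OF gcd_eq_1_iff_multiplicity[OF that(2,3)] that(1)])
    then show ?thesis
      unfolding vp_def using p by simp
  qed
  have vw: "vp w = vp u1 + vp u2 + vp u3" "vp n = vp s1 + vp s2 + vp s3" "vp (w * v) = vp w + vp v"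
    using nz p unfolding vp_def by (simp_all add: prime_multiplicity_distrib)
  have "vp w \<le> 1"
    using A(1) squarefree_factorial_semiring''[of w] nz p unfolding vp_def by simp
  then show "vp u1 + vp u2 + vp u3 \<le> 1"
    using vw(1) by simp
  show "vp s1 + vp s2 + vp s3 = 0 \<or> vp u1 + vp u2 + vp u3 + vp v = 0"
    using coprime[OF A(2)] nz vw by simp
  show "vp y1 = 0 \<or> vp y2 = 0" "vp y1 = 0 \<or> vp y3 = 0" "vp y2 = 0 \<or> vp y3 = 0"
    using coprime[OF A(3)] coprime[OF A(4)] coprime[OF A(5)] nz by simp_all
  have "vp (gcd s2 s3) = 0 \<longleftrightarrow> vp s2 = 0 \<or> vp s3 = 0"
      "vp (gcd s1 s3) = 0 \<longleftrightarrow> vp s1 = 0 \<or> vp s3 = 0"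
      "vp (gcd s1 s2) = 0 \<longleftrightarrow> vp s1 = 0 \<or> vp s2 = 0"
    using nz p unfolding vp_def by (auto simp: multiplicity_gcd min_def)
  then show "vp y1 = 0 \<or> vp s2 = 0 \<or> vp s3 = 0" "vp y2 = 0 \<or> vp s1 = 0 \<or> vp s3 = 0"
      "vp y3 = 0 \<or> vp s1 = 0 \<or> vp s2 = 0"
    using coprime[OF A(6)] coprime[OF A(7)] coprime[OF A(8)] nz by simp_all
  have vx: "vp (s1 * u1 * y1 ^ 2) = vp s1 + vp u1 + 2 * vp y1"
      "vp (s2 * u2 * y2 ^ 2) = vp s2 + vp u2 + 2 * vp y2"
      "vp (s3 * u3 * y3 ^ 2) = vp s3 + vp u3 + 2 * vp y3"
    using nz p unfolding vp_def by (simp_all add: prime_multiplicity_distrib)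
  have sums: "s1 * u1 * y1 ^ 2 + s2 * u2 * y2 ^ 2 + s3 * u3 * y3 ^ 2 = 0"
      "s2 * u2 * y2 ^ 2 + s1 * u1 * y1 ^ 2 + s3 * u3 * y3 ^ 2 = 0"
      "s3 * u3 * y3 ^ 2 + s1 * u1 * y1 ^ 2 + s2 * u2 * y2 ^ 2 = 0"
    using admissible by (simp_all add: ac_simps)
  have "vp (s1 * u1 * y1 ^ 2) \<ge> min (vp (s2 * u2 * y2 ^ 2)) (vp (s3 * u3 * y3 ^ 2))"
      "vp (s2 * u2 * y2 ^ 2) \<ge> min (vp (s1 * u1 * y1 ^ 2)) (vp (s3 * u3 * y3 ^ 2))"
      "vp (s3 * u3 * y3 ^ 2) \<ge> min (vp (s1 * u1 * y1 ^ 2)) (vp (s2 * u2 * y2 ^ 2))"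
    using nz unfolding vp_def
    by (simp_all add: multiplicity_ge_min_if_sum_eq_0[OF p sums(1)]
        multiplicity_ge_min_if_sum_eq_0[OF p sums(2)] multiplicity_ge_min_if_sum_eq_0[OF p sums(3)])
  then show "vp s1 + vp u1 + 2 * vp y1 \<ge> min (vp s2 + vp u2 + 2 * vp y2) (vp s3 + vp u3 + 2 * vp y3)"
      "vp s2 + vp u2 + 2 * vp y2 \<ge> min (vp s1 + vp u1 + 2 * vp y1) (vp s3 + vp u3 + 2 * vp y3)"
      "vp s3 + vp u3 + 2 * vp y3 \<ge> min (vp s1 + vp u1 + 2 * vp y1) (vp s2 + vp u2 + 2 * vp y2)"
    unfolding vx .
qed

lemma multiplicity_point:
  assumes p: "prime p"
  defines "vp \<equiv> multiplicity p"
  shows "min (vp a1) (vp n) = vp s1" "min (vp a2) (vp n) = vp s2" "min (vp a3) (vp n) = vp s3"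
    and "vp a1 = 0 \<or> vp a2 = 0 \<or> vp T = 0 \<or> vp n = 0"
    and "min (vp a1 - vp s1) (min (vp a2 - vp s2) (vp a3 - vp s3)) = vp w + 2 * vp v"
proof -
  have "vp w = vp u1 + vp u2 + vp u3"
    using nonzero p unfolding vp_def by (simp add: prime_multiplicity_distrib)
  moreover have "vp a1 = vp s1 + vp u1 + (vp u1 + vp u2 + vp u3) + 2 * vp v + 2 * vp y1"
      "vp a2 = vp s2 + vp u2 + (vp u1 + vp u2 + vp u3) + 2 * vp v + 2 * vp y2"
      "vp a3 = vp s3 + vp u3 + (vp u1 + vp u2 + vp u3) + 2 * vp v + 2 * vp y3"
      "vp T = 2 * (vp u1 + vp u2 + vp u3) + 3 * vp v + vp y1 + vp y2 + vp y3"
      "vp n = vp s1 + vp s2 + vp s3"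
    using nonzero p unfolding vp_def by (simp_all add: prime_multiplicity_distrib)
  ultimately show "min (vp a1) (vp n) = vp s1" "min (vp a2) (vp n) = vp s2" "min (vp a3) (vp n) = vp s3"
    and "vp a1 = 0 \<or> vp a2 = 0 \<or> vp T = 0 \<or> vp n = 0"
    and "min (vp a1 - vp s1) (min (vp a2 - vp s2) (vp a3 - vp s3)) = vp w + 2 * vp v"
    using exponents_recover[OF exponents[OF p, folded vp_def]] by simp_all
qed

lemma sum_eq_0: "a1 + a2 + a3 = 0"
proof -
  have "a1 + a2 + a3 = w * v ^ 2 * (s1 * u1 * y1 ^ 2 + s2 * u2 * y2 ^ 2 + s3 * u3 * y3 ^ 2)"
    by (simp add: algebra_simps)
  then show ?thesis
    using admissible by simp
qed

lemma minus_add_eq: "- (a1 + a2) = a3"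
  using sum_eq_0 by (metis add.commute eq_neg_iff_add_eq_0)

lemma cubic_triple: "cubic_triple a1 a2 a3 T n"
proof
  show nz: "a1 \<noteq> 0" "a2 \<noteq> 0" "a3 \<noteq> 0" "T > 0" "n > 0"
    using nonzero admissible by simp_all
  show "a1 + a2 + a3 = 0"
    by (fact sum_eq_0)
  show "a1 * a2 * a3 = T ^ 2 * n"
    by (simp add: power2_eq_square power3_eq_cube ac_simps)
  have "T \<noteq> 0" "n \<noteq> 0"
    using nz(4,5) by linarith+
  then show "gcd (gcd a1 a2) (gcd T n) = 1"
    using multiplicity_point(4)
    by (intro gcd_gcd_eq_1_iff_multiplicity[OF nz(1,2), THEN iffD2]) blast+
qed

lemma decompose_point: "decompose a1 a2 a3 n = (v, (s1, s2, s3), (u1, u2, u3), (y1, y2, y3))"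
proof -
  have nz: "a1 \<noteq> 0" "a2 \<noteq> 0" "a3 \<noteq> 0" "n \<noteq> 0" "w \<noteq> 0"
    using nonzero by simp_all
  have pos: "s1 > 0" "s2 > 0" "s3 > 0" "v > 0" "y1 > 0" "y2 > 0" "y3 > 0" "u3 > 0"
    using admissible by simp_all
  have s: "gcd a1 n = s1" "gcd a2 n = s2" "gcd a3 n = s3"
    by (rule int_eq_if_multiplicity_eq;
        simp_all only: gcd_pos_int nz pos multiplicity_gcd multiplicity_point(1-3) simp_thms)+
  define c1 c2 c3 where "c1 = u1 * w * v ^ 2 * y1 ^ 2" and "c2 = u2 * w * v ^ 2 * y2 ^ 2"
    and "c3 = u3 * w * v ^ 2 * y3 ^ 2"
  have a: "a1 = s1 * c1" "a2 = s2 * c2" "a3 = s3 * c3"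
    unfolding c1_def c2_def c3_def by (simp_all only: mult.assoc)
  then have c: "a1 div s1 = c1" "a2 div s2 = c2" "a3 div s3 = c3"
    using pos by simp_all
  have c_nz: "c1 \<noteq> 0" "c2 \<noteq> 0" "c3 \<noteq> 0"
    using nonzero unfolding c1_def c2_def c3_def by simp_all
  have G: "gcd c1 (gcd c2 c3) = \<bar>w\<bar> * v ^ 2"
  proof (rule int_eq_if_multiplicity_eq)
    fix p :: int
    assume p: "prime p"
    have mult: "multiplicity p (x * y) = multiplicity p x + multiplicity p y"
      if "x \<noteq> 0" "y \<noteq> 0" for x y :: int
      using that p by (simp add: prime_multiplicity_distrib)
    have "multiplicity p (gcd c1 (gcd c2 c3))
        = min (multiplicity p a1 - multiplicity p s1)
            (min (multiplicity p a2 - multiplicity p s2) (multiplicity p a3 - multiplicity p s3))"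
      unfolding a using c_nz pos p by (simp add: multiplicity_gcd mult)
    also have "\<dots> = multiplicity p w + 2 * multiplicity p v"
      by (rule multiplicity_point(5)[OF p])
    also have "\<dots> = multiplicity p (\<bar>w\<bar> * v ^ 2)"
      using nz(5) pos(4) p by (simp add: mult prime_multiplicity_distrib(2))
    finally show "multiplicity p (gcd c1 (gcd c2 c3)) = multiplicity p (\<bar>w\<bar> * v ^ 2)" .
  qed (use c_nz nz pos in auto)
  have split_sign: "u * W * V * Y = (\<bar>W\<bar> * V) * (sgn W * u * Y)" if "W \<noteq> 0" for u W V Y :: int
    using that by (simp add: abs_sgn ac_simps)
  have "\<bar>w\<bar> * v ^ 2 \<noteq> 0"
    using nz pos by simp
  then have b: "c1 div (\<bar>w\<bar> * v ^ 2) = sgn w * u1 * y1 ^ 2" "c2 div (\<bar>w\<bar> * v ^ 2) = sgn w * u2 * y2 ^ 2"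
      "c3 div (\<bar>w\<bar> * v ^ 2) = sgn w * u3 * y3 ^ 2"
    unfolding c1_def c2_def c3_def split_sign[OF nz(5)] by simp_all
  have "squarefree w"
    using admissible by simp
  then have "squarefree \<bar>w\<bar>" "squarefree u1" "squarefree u2" "squarefree u3"
    by (auto simp: abs_if elim: squarefree_mono[rotated])
  then have sqf: "squarefree \<bar>w\<bar>" "squarefree (sgn w * u1)" "squarefree (sgn w * u2)"
      "squarefree (sgn w * u3)"
    using nonzero by (simp_all add: sgn_if)
  have "sgn (sgn w * u3 * y3 ^ 2) = sgn w"
    using pos nz by (simp add: sgn_mult)
  then show ?thesis
    unfolding decompose_def Let_def s c G b
    using sqf pos nz by (simp add: square_part_mult_square squarefree_part_mult_square)
qed

end

section \<open>Counting\<close>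

lemma cubic_triple_iff_point:
  assumes "t4 < 0"
  shows "cubic_triple t1 t2 (- (t1 + t2)) \<bar>t3\<bar> (- t4) \<longleftrightarrow>
    primitive4 (t1, t2, t3, t4) \<and> inU (t1, t2, t3, t4)"
proof
  assume "cubic_triple t1 t2 (- (t1 + t2)) \<bar>t3\<bar> (- t4)"
  then interpret cubic_triple t1 t2 "- (t1 + t2)" "\<bar>t3\<bar>" "- t4" .
  have "t1 * t2 * (t1 + t2) = t3 ^ 2 * t4"
    using prod_eq by (simp add: power2_abs algebra_simps)
  then show "primitive4 (t1, t2, t3, t4) \<and> inU (t1, t2, t3, t4)"
    using primitive nonzero pos by (simp add: primitive4_def inU_def onS_def)
next
  assume "primitive4 (t1, t2, t3, t4) \<and> inU (t1, t2, t3, t4)"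
  then have S: "t1 * t2 * (t1 + t2) = t3 ^ 2 * t4" and U: "inU (t1, t2, t3, t4)"
    and P: "gcd (gcd t1 t2) (gcd t3 t4) = 1"
    by (simp_all add: primitive4_def inU_def onS_def)
  have "t3 \<noteq> 0"
    using S U by (auto simp: inU_def)
  with S U assms have "t1 \<noteq> 0" "t2 \<noteq> 0" "t1 + t2 \<noteq> 0"
    by (auto simp: inU_def)
  then show "cubic_triple t1 t2 (- (t1 + t2)) \<bar>t3\<bar> (- t4)"
    using S P assms \<open>t3 \<noteq> 0\<close> by unfold_locales (simp_all add: power2_abs algebra_simps)
qed

definition param_point :: "param \<Rightarrow> bool \<Rightarrow> vec4" where
  "param_point x e = (case x of (v, (s1, s2, s3), (u1, u2, u3), (y1, y2, y3)) \<Rightarrow>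
     (s1 * u1 ^ 2 * u2 * u3 * v ^ 2 * y1 ^ 2, s2 * u1 * u2 ^ 2 * u3 * v ^ 2 * y2 ^ 2,
      (if e then 1 else - 1) * (u1 ^ 2 * u2 ^ 2 * u3 ^ 2 * v ^ 3 * y1 * y2 * y3), - (s1 * s2 * s3)))"

definition point_param :: "vec4 \<Rightarrow> param \<times> bool" where
  "point_param t = (case t of (t1, t2, t3, t4) \<Rightarrow> (decompose t1 t2 (- (t1 + t2)) (- t4), t3 > 0))"

text \<open>Representatives of the points counted by \<open>N_U\<close>: on \<open>U\<close> we have \<open>t4 \<noteq> 0\<close>.\<close>
definition neg_points :: "real \<Rightarrow> vec4 set" where
  "neg_points B = {t. primitive4 t \<and> inU t \<and> real_of_int (H4 t) \<le> B \<and> snd (snd (snd t)) < 0}"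

lemma param_point_eq:
  fixes v s1 s2 s3 u1 u2 u3 y1 y2 y3 :: int
  defines "w \<equiv> u1 * u2 * u3"
  shows "param_point (v, (s1, s2, s3), (u1, u2, u3), (y1, y2, y3)) e =
    (s1 * u1 * w * v ^ 2 * y1 ^ 2, s2 * u2 * w * v ^ 2 * y2 ^ 2,
     (if e then 1 else - 1) * (w ^ 2 * v ^ 3 * y1 * y2 * y3), - (s1 * s2 * s3))"
  unfolding w_def param_point_def by (simp add: power2_eq_square power_mult_distrib algebra_simps)

lemma H4_param_point: "H4 (param_point (v, s, u, y) e) = Psi v s u y"
proof -
  obtain s1 s2 s3 u1 u2 u3 y1 y2 y3 where "s = (s1, s2, s3)" "u = (u1, u2, u3)" "y = (y1, y2, y3)"
    by (metis prod.collapse)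
  moreover have "\<bar>(if e then 1 else - 1) * x\<bar> = \<bar>x\<bar>" for x :: int
    by simp
  moreover have "max (max a b) (max c d) = max (max d c) (max a b)" for a b c d :: int
    by (simp add: max.commute max.left_commute)
  ultimately show ?thesis
    unfolding param_point_def H4_def Psi_def by (simp only: prod.case abs_minus_cancel)
qed

lemma param_point_mem_neg_points:
  assumes "x \<in> param_set B"
  shows "param_point x e \<in> neg_points B"
proof -
  obtain v s1 s2 s3 u1 u2 u3 y1 y2 y3 where x: "x = (v, (s1, s2, s3), (u1, u2, u3), (y1, y2, y3))"
    by (metis prod.collapse)
  then have adm: "admissible x" and height: "real_of_int (H4 (param_point x e)) \<le> B"
    using assms by (simp_all add: mem_param_set_iff H4_param_point)
  interpret admissible_param v s1 s2 s3 u1 u2 u3 y1 y2 y3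
    using adm x by unfold_locales simp
  have "\<bar>(if e then 1 else - 1) * z\<bar> = z" if "z > 0" for z :: int
    using that by simp
  then have "\<bar>(if e then 1 else - 1) * T\<bar> = T"
    using cubic_triple.pos(1)[OF cubic_triple] .
  then have "cubic_triple a1 a2 (- (a1 + a2)) \<bar>(if e then 1 else - 1) * T\<bar> (- (- n))"
    using cubic_triple unfolding minus_add_eq by simp
  then have "primitive4 (param_point x e) \<and> inU (param_point x e)"
    using cubic_triple_iff_point[of "- n"] admissible unfolding x param_point_eq by simp
  then show ?thesis
    using height admissible unfolding neg_points_def x param_point_eq by simp
qed

lemma point_param_param_point:
  assumes "admissible x"
  shows "point_param (param_point x e) = (x, e)"
proof -
  obtain v s1 s2 s3 u1 u2 u3 y1 y2 y3 where x: "x = (v, (s1, s2, s3), (u1, u2, u3), (y1, y2, y3))"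
    by (metis prod.collapse)
  interpret admissible_param v s1 s2 s3 u1 u2 u3 y1 y2 y3
    using assms x by unfold_locales simp
  have "point_param (param_point x e) =
      (decompose a1 a2 (- (a1 + a2)) (- (- n)), 0 < (if e then 1 else - 1) * T)"
    unfolding x param_point_eq point_param_def by (simp only: prod.case)
  moreover have "0 < (if e then 1 else - 1) * z \<longleftrightarrow> e" if "z > 0" for z :: int
    using that by (simp add: zero_less_mult_iff)
  ultimately show ?thesis
    using decompose_point cubic_triple.pos(1)[OF cubic_triple] x
    unfolding minus_add_eq minus_minus by simp
qed

lemma point_param_mem:
  assumes "t \<in> neg_points B"
  shows "point_param t \<in> param_set B \<times> UNIV" and "case_prod param_point (point_param t) = t"
proof -
  obtain t1 t2 t3 t4 where t: "t = (t1, t2, t3, t4)"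
    by (metis prod.collapse)
  have "t4 < 0" and height: "real_of_int (H4 t) \<le> B"
    and "cubic_triple t1 t2 (- (t1 + t2)) \<bar>t3\<bar> (- t4)"
    using assms cubic_triple_iff_point[of t4] unfolding t neg_points_def by auto
  then interpret cubic_triple t1 t2 "- (t1 + t2)" "\<bar>t3\<bar>" "- t4"
    by simp
  obtain v s1 s2 s3 u1 u2 u3 y1 y2 y3
    where dec: "decompose t1 t2 (- (t1 + t2)) (- t4) = (v, (s1, s2, s3), (u1, u2, u3), (y1, y2, y3))"
    by (metis prod.collapse)
  have "(if t3 > 0 then 1 else - 1) * \<bar>t3\<bar> = t3"
    by (simp add: abs_if)
  then have "param_point (v, (s1, s2, s3), (u1, u2, u3), (y1, y2, y3)) (t3 > 0) = t"
    using decompose_factorization[OF dec] unfolding param_point_eq t by simp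
  moreover have "point_param t = ((v, (s1, s2, s3), (u1, u2, u3), (y1, y2, y3)), t3 > 0)"
    using dec unfolding point_param_def t by simp
  moreover have "H4 t = Psi v (s1, s2, s3) (u1, u2, u3) (y1, y2, y3)"
    using calculation(1) H4_param_point by metis
  ultimately show "case_prod param_point (point_param t) = t"
    and "point_param t \<in> param_set B \<times> UNIV"
    using decompose_admissible[OF dec] height by (simp_all add: mem_param_set_iff)
qed

lemma bij_betw_param_point: "bij_betw (case_prod param_point) (param_set B \<times> UNIV) (neg_points B)"
proof (rule bij_betw_byWitness[where f' = point_param])
  show "\<forall>x \<in> param_set B \<times> UNIV. point_param (case_prod param_point x) = x"
    by (auto simp: mem_param_set_iff point_param_param_point)
  show "\<forall>t \<in> neg_points B. case_prod param_point (point_param t) = t"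
    using point_param_mem(2) by blast
  show "case_prod param_point ` (param_set B \<times> UNIV) \<subseteq> neg_points B"
    using param_point_mem_neg_points by auto
  show "point_param ` neg_points B \<subseteq> param_set B \<times> UNIV"
    using point_param_mem(1) by blast
qed

lemma neg4_neg4 [simp]: "neg4 (neg4 t) = t"
  by (cases t) (simp add: neg4_def)

lemma onS_neg [simp]: "onS (- a, - b, - c, - d) \<longleftrightarrow> onS (a, b, c, d)"
proof -
  have "(- a) * (- b) * (- a + - b) = - (a * b * (a + b))" "(- c) ^ 2 * (- d) = - (c ^ 2 * d)"
    by (simp_all add: algebra_simps)
  then show ?thesis
    unfolding onS_def by (simp only: prod.case neg_equal_iff_equal)
qed

lemma
  shows primitive4_neg4 [simp]: "primitive4 (neg4 t) \<longleftrightarrow> primitive4 t"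
    and inU_neg4 [simp]: "inU (neg4 t) \<longleftrightarrow> inU t"
    and H4_neg4 [simp]: "H4 (neg4 t) = H4 t"
    and snd_neg4: "snd (snd (snd (neg4 t))) = - snd (snd (snd t))"
  by (cases t; auto simp: neg4_def primitive4_def inU_def H4_def)+

lemma N_U_eq_card_neg_points: "N_U B = card (neg_points B)"
proof -
  let ?S = "{t. primitive4 t \<and> inU t \<and> real_of_int (H4 t) \<le> B}"
  let ?pair = "\<lambda>t. {t, neg4 t}"
  have "?pair t \<in> ?pair ` neg_points B" if "t \<in> ?S" for t
  proof -
    have "snd (snd (snd t)) \<noteq> 0"
      using that by (cases t) (auto simp: inU_def onS_def)
    then have "t \<in> neg_points B \<or> neg4 t \<in> neg_points B"
      using that by (auto simp: neg_points_def snd_neg4)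
    then show ?thesis
    proof
      assume "neg4 t \<in> neg_points B"
      then have "?pair (neg4 t) \<in> ?pair ` neg_points B"
        by (rule imageI)
      then show ?thesis
        by (simp add: insert_commute)
    qed (rule imageI)
  qed
  moreover have "neg_points B \<subseteq> ?S"
    unfolding neg_points_def by blast
  ultimately have "?pair ` ?S = ?pair ` neg_points B"
    by blast
  moreover have "inj_on ?pair (neg_points B)"
  proof (rule inj_onI)
    fix x y
    assume "x \<in> neg_points B" "y \<in> neg_points B" "?pair x = ?pair y"
    moreover from this(1,2) have "x \<noteq> neg4 y"
      using snd_neg4[of y] by (auto simp: neg_points_def)
    ultimately show "x = y"
      by (auto simp: doubleton_eq_iff)
  qed
  ultimately show ?thesis
    unfolding N_U_def by (simp add: card_image)
qed

theorem lemma4p4: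
  fixes B :: real
  shows "N_U B = 2 * card (param_set B)"
proof -
  have "N_U B = card (neg_points B)"
    by (rule N_U_eq_card_neg_points)
  also have "\<dots> = card (param_set B \<times> (UNIV :: bool set))"
    using bij_betw_same_card[OF bij_betw_param_point] by simp
  also have "\<dots> = 2 * card (param_set B)"
    by (simp add: card_cartesian_product)
  finally show ?thesis .
qed

end
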